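(* Let $z\in\mathcal N_h^I$ and $w_h,v_h\in\mathbb V_h$. If $(w_h-v_h)(z)\ge(w_h-v_h)(z')$ for all $z'\in\widetilde{\mathcal N}_{\mathfrak h}(z)$, then $$S^+_{\mathfrak h}w_h(z)\le S^+_{\mathfrak h}v_h(z),\qquad S^-_{\mathfrak h}w_h(z)\ge S^-_{\mathfrak h}v_h(z),$$ and $-\Delta^\diamond_{\infty,\mathfrak h}w_h(z)\ge-\Delta^\diamond_{\infty,\mathfrak h}v_h(z)$.
   Context: Setting: $\Omega\subset\mathbb R^d$ ($d\ge1$) is a bounded domain with continuous boundary. For $r>0$, $\Omega^{(r)}=\{x\in\Omega:\operatorname{dist}(x,\partial\Omega)>r\}$. $\mathcal T_h$ is a mesh of closed simplices, $h=\max_T\operatorname{diam}T$, $\Omega_h$ the interior of the union of the simplices, with $\Omega^{(h)}\subset\Omega_h\subset\Omega$; $\mathcal N_h$ the set of vertices. $\mathbb V_h$: continuous piecewise linear functions on $\mathcal T_h$ with hat basis $\{\hat\varphi_z\}_{z\in\mathcal N_h}$ ($\hat\varphi_z(z')=\delta_{zz'}$), and $\mathcal I_h$ the Lagrange interpolant. Parameters $\mathfrak h=(h,\varepsilon,\theta)$, $\varepsilon\in[h,\operatorname{diam}\Omega]$, $0<\theta\le1$. $\mathcal N_h^I=\mathcal N_h\cap\Omega^{(2\varepsilon)}$. $\mathbb S_\theta$: finite symmetric subset of the unit sphere $\mathbb S$ such that each $v\in\mathbb S$ has $v_\theta\in\mathbb S_\theta$ with $|v-v_\theta|\le\theta$.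 For $z\in\mathcal N_h^I$: $\mathcal N_{\mathfrak h}(z)=\{z\}\cup\{z+\varepsilon v_\theta:v_\theta\in\mathbb S_\theta\}$; for $w\in C(\overline\Omega)$, $S^+_{\mathfrak h}w(z)=\varepsilon^{-1}(\max_{x\in\mathcal N_{\mathfrak h}(z)}w(x)-w(z))$, $S^-_{\mathfrak h}w(z)=\varepsilon^{-1}(w(z)-\min_{x\in\mathcal N_{\mathfrak h}(z)}w(x))$, $-\Delta^\diamond_{\infty,\mathfrak h}w(z)=-\varepsilon^{-1}(S^+_{\mathfrak h}\mathcal I_hw(z)-S^-_{\mathfrak h}\mathcal I_hw(z))$; and $\widetilde{\mathcal N}_{\mathfrak h}(z)=\{z\}\cup\{z'\in\mathcal N_h:\exists v_\theta\in\mathbb S_\theta,\ \hat\varphi_{z'}(z+\varepsilon v_\theta)>0\}$. *)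

theory Defs
  imports "HOL-Analysis.Analysis"
begin

definition continuous_boundary :: "'a::euclidean_space set \<Rightarrow> bool" where
  "continuous_boundary \<Omega> \<longleftrightarrow>
     (\<forall>x\<in>frontier \<Omega>. \<exists>r>0. \<exists>n g. norm n = 1 \<and> continuous_on UNIV (g :: 'a \<Rightarrow> real) \<and>
        \<Omega> \<inter> ball x r = {y\<in>ball x r. y \<bullet> n > g (y - (y \<bullet> n) *\<^sub>R n)})"

definition bounded_domain_cb :: "'a::euclidean_space set \<Rightarrow> bool" where
  "bounded_domain_cb \<Omega> \<longleftrightarrow> open \<Omega> \<and> connected \<Omega> \<and> \<Omega> \<noteq> {} \<and> bounded \<Omega> \<and> continuous_boundary \<Omega>"

definition inner_layer :: "'a::euclidean_space set \<Rightarrow> real \<Rightarrow> 'a set" where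
  "inner_layer \<Omega> r = {x\<in>\<Omega>. infdist x (frontier \<Omega>) > r}"

definition simplicial_mesh :: "'a::euclidean_space set set \<Rightarrow> bool" where
  "simplicial_mesh \<T> \<longleftrightarrow> finite \<T> \<and> \<T> \<noteq> {} \<and>
     (\<forall>T\<in>\<T>. int DIM('a) simplex T) \<and>
     (\<forall>T\<in>\<T>. \<forall>T'\<in>\<T>. (T \<inter> T') face_of T \<and> (T \<inter> T') face_of T')"

definition mesh_size :: "'a::euclidean_space set set \<Rightarrow> real" where
  "mesh_size \<T> = Max (diameter ` \<T>)"

definition mesh_domain :: "'a::euclidean_space set set \<Rightarrow> 'a set" where
  "mesh_domain \<T> = interior (\<Union>\<T>)"

definition nodes :: "'a::euclidean_space set set \<Rightarrow> 'a set" where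
  "nodes \<T> = {x. \<exists>T\<in>\<T>. x extreme_point_of T}"

text \<open>Continuous piecewise linear functions (only values on the closed mesh matter).\<close>
definition Vh :: "'a::euclidean_space set set \<Rightarrow> ('a \<Rightarrow> real) set" where
  "Vh \<T> = {f. continuous_on (\<Union>\<T>) f \<and> (\<forall>T\<in>\<T>. \<exists>a c. \<forall>x\<in>T. f x = a \<bullet> x + c)}"

definition hat :: "'a::euclidean_space set set \<Rightarrow> 'a \<Rightarrow> 'a \<Rightarrow> real" where
  "hat \<T> z = (THE g. g \<in> Vh \<T> \<and> (\<forall>z'\<in>nodes \<T>. g z' = (if z' = z then 1 else 0)) \<and>
                     (\<forall>x. x \<notin> \<Union>\<T> \<longrightarrow> g x = 0))"

definition lagrange_interp :: "'a::euclidean_space set set \<Rightarrow> ('a \<Rightarrow> real) \<Rightarrow> 'a \<Rightarrow> real" where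
  "lagrange_interp \<T> w = (\<lambda>x. \<Sum>z\<in>nodes \<T>. w z * hat \<T> z x)"

definition theta_net :: "real \<Rightarrow> 'a::euclidean_space set \<Rightarrow> bool" where
  "theta_net \<theta> S \<longleftrightarrow> finite S \<and> S \<subseteq> sphere 0 1 \<and> (\<forall>v\<in>S. - v \<in> S) \<and>
     (\<forall>u\<in>sphere 0 1. \<exists>v\<in>S. norm (u - v) \<le> \<theta>)"

definition stencil :: "real \<Rightarrow> 'a::euclidean_space set \<Rightarrow> 'a \<Rightarrow> 'a set" where
  "stencil \<epsilon> S z = insert z ((\<lambda>v. z + \<epsilon> *\<^sub>R v) ` S)"

definition Splus :: "real \<Rightarrow> 'a::euclidean_space set \<Rightarrow> ('a \<Rightarrow> real) \<Rightarrow> 'a \<Rightarrow> real" where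
  "Splus \<epsilon> S w z = (Max (w ` stencil \<epsilon> S z) - w z) / \<epsilon>"

definition Sminus :: "real \<Rightarrow> 'a::euclidean_space set \<Rightarrow> ('a \<Rightarrow> real) \<Rightarrow> 'a \<Rightarrow> real" where
  "Sminus \<epsilon> S w z = (w z - Min (w ` stencil \<epsilon> S z)) / \<epsilon>"

definition neg_disc_inf_lap :: "'a::euclidean_space set set \<Rightarrow> real \<Rightarrow> 'a set \<Rightarrow> ('a \<Rightarrow> real) \<Rightarrow> 'a \<Rightarrow> real" where
  "neg_disc_inf_lap \<T> \<epsilon> S w z =
     - (Splus \<epsilon> S (lagrange_interp \<T> w) z - Sminus \<epsilon> S (lagrange_interp \<T> w) z) / \<epsilon>"

definition ext_stencil :: "'a::euclidean_space set set \<Rightarrow> real \<Rightarrow> 'a set \<Rightarrow> 'a \<Rightarrow> 'a set" where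
  "ext_stencil \<T> \<epsilon> S z = insert z {z'\<in>nodes \<T>. \<exists>v\<in>S. hat \<T> z' (z + \<epsilon> *\<^sub>R v) > 0}"

end

theory Submission
  imports Defs
begin

text \<open>On a simplex of the mesh every function of \<open>Vh\<close> is the convex combination of its
  vertex values with the barycentric coordinates as weights, and by conformity of the mesh the
  hat function of a node is the piecewise barycentric coordinate of that node. Hence at a
  stencil point \<open>y\<close> the value of \<open>w - v\<close> is a convex combination of its values at the nodes
  \<open>z'\<close> with \<open>hat z' y > 0\<close>, which all lie in the extended stencil; so \<open>w - v\<close> attains its
  maximum over the stencil at \<open>z\<close>. Taking maxima and minima of \<open>w\<close> and \<open>v\<close> over the stencil
  then gives the one-sided inequalities, and the Lagrange interpolant does not change the values
  on the stencil because the stencil lies in the mesh.\<close>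

definition affine_functional :: "('a::real_inner \<Rightarrow> real) \<Rightarrow> bool" where
  "affine_functional f \<longleftrightarrow> (\<exists>p c. \<forall>x. f x = p \<bullet> x + c)"

lemma continuous_on_affine_functional: "affine_functional f \<Longrightarrow> continuous_on A f"
proof -
  assume "affine_functional f"
  then obtain p c where "f = (\<lambda>x. p \<bullet> x + c)"
    unfolding affine_functional_def by blast
  then show ?thesis by (simp add: continuous_intros)
qed

lemma affine_functional_affine_combination:
  assumes "affine_functional f" "sum \<mu> C = 1"
  shows "f (\<Sum>b\<in>C. \<mu> b *\<^sub>R b) = (\<Sum>b\<in>C. \<mu> b * f b)"
proof -
  obtain p c where f: "\<And>x. f x = p \<bullet> x + c"
    using assms(1) unfolding affine_functional_def by blast
  have "f (\<Sum>b\<in>C. \<mu> b *\<^sub>R b) = (\<Sum>b\<in>C. \<mu> b * (p \<bullet> b)) + (\<Sum>b\<in>C. \<mu> b) * c"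
    by (simp add: f inner_sum_right assms(2))
  also have "\<dots> = (\<Sum>b\<in>C. \<mu> b * f b)"
    by (simp add: f sum.distrib sum_distrib_right distrib_left)
  finally show ?thesis .
qed

lemma affine_independent_coordinate_exists:
  fixes C :: "'a::euclidean_space set"
  assumes "\<not> affine_dependent C" "b \<in> C"
  shows "\<exists>f. affine_functional f \<and> (\<forall>b'\<in>C. f b' = (if b' = b then 1 else 0))"
proof (cases "C = {b}")
  case True
  then show ?thesis
    by (intro exI[of _ "\<lambda>_. 1"]) (auto simp: affine_functional_def intro: exI[of _ 0])
next
  case False
  then obtain a where a: "a \<in> C" "a \<noteq> b" using assms(2) by blast
  let ?B = "(\<lambda>x. -a + x) ` (C - {a})"
  have "independent ?B"
    using assms(1) affine_dependent_iff_dependent2[OF a(1)] by simp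
  from linear_independent_extend[OF this, of "\<lambda>y. if y = -a + b then 1 else 0"]
  obtain g :: "'a \<Rightarrow> real" where g: "linear g" "\<And>y. y \<in> ?B \<Longrightarrow> g y = (if y = -a + b then 1 else 0)"
    by blast
  have "g (x - a) = adjoint g 1 \<bullet> x + - (adjoint g 1 \<bullet> a)" for x
    using adjoint_clauses(2)[OF g(1), of 1 "x - a"] by (simp add: inner_diff_right)
  then have "affine_functional (\<lambda>x. g (x - a))"
    unfolding affine_functional_def by blast
  moreover have "g (b' - a) = (if b' = b then 1 else 0)" if "b' \<in> C" for b'
  proof (cases "b' = a")
    case True
    then show ?thesis using a(2) linear_0[OF g(1)] by simp
  next
    case False
    then have "-a + b' \<in> ?B" using that by blast
    then show ?thesis using g(2)[of "-a + b'"] by (simp add: add.commute)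
  qed
  ultimately show ?thesis by (intro exI[of _ "\<lambda>x. g (x - a)"]) simp
qed

text \<open>Barycentric coordinates, set to zero for \<open>b \<notin> C\<close>: then the hat function of a node \<open>z\<close> is
  \<open>barycentric (vertices T) z\<close> on every simplex \<open>T\<close>, whether or not \<open>z\<close> is a vertex of \<open>T\<close>.\<close>

definition barycentric :: "'a::euclidean_space set \<Rightarrow> 'a \<Rightarrow> 'a \<Rightarrow> real" where
  "barycentric C b =
     (if b \<in> C then SOME f. affine_functional f \<and> (\<forall>b'\<in>C. f b' = (if b' = b then 1 else 0))
      else (\<lambda>_. 0))"

lemma
  assumes "\<not> affine_dependent C"
  shows affine_functional_barycentric: "affine_functional (barycentric C b)"
    and barycentric_vertex: "b' \<in> C \<Longrightarrow> barycentric C b b' = (if b' = b then 1 else 0)"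
proof -
  have "affine_functional (barycentric C b) \<and>
        (\<forall>b'\<in>C. barycentric C b b' = (if b' = b then 1 else 0))"
  proof (cases "b \<in> C")
    case True
    then show ?thesis
      unfolding barycentric_def
      using someI_ex[OF affine_independent_coordinate_exists[OF assms True]] by simp
  next
    case False
    then show ?thesis
      by (auto simp: barycentric_def affine_functional_def intro: exI[of _ 0])
  qed
  then show "affine_functional (barycentric C b)"
    and "b' \<in> C \<Longrightarrow> barycentric C b b' = (if b' = b then 1 else 0)"
    by blast+
qed

lemma barycentric_affine_combination:
  assumes "\<not> affine_dependent C" "W \<subseteq> C" "sum \<mu> W = 1"
  shows "barycentric C b (\<Sum>b'\<in>W. \<mu> b' *\<^sub>R b') = (if b \<in> W then \<mu> b else 0)"
proof -
  have "finite W" using assms(3) sum.infinite by fastforce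
  have "barycentric C b (\<Sum>b'\<in>W. \<mu> b' *\<^sub>R b') = (\<Sum>b'\<in>W. \<mu> b' * barycentric C b b')"
    using affine_functional_affine_combination[OF affine_functional_barycentric[OF assms(1)] assms(3)] .
  also have "\<dots> = (\<Sum>b'\<in>W. if b' = b then \<mu> b else 0)"
    using barycentric_vertex[OF assms(1)] assms(2) by (intro sum.cong) auto
  also have "\<dots> = (if b \<in> W then \<mu> b else 0)"
    using \<open>finite W\<close> by simp
  finally show ?thesis .
qed

lemma
  assumes "finite C" "\<not> affine_dependent C" "x \<in> convex hull C"
  shows barycentric_nonneg: "0 \<le> barycentric C b x"
    and sum_barycentric: "(\<Sum>b\<in>C. barycentric C b x) = 1"
    and barycentric_representation: "x = (\<Sum>b\<in>C. barycentric C b x *\<^sub>R b)"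
proof -
  obtain \<mu> where \<mu>: "\<forall>b\<in>C. 0 \<le> \<mu> b" "sum \<mu> C = 1" "x = (\<Sum>b\<in>C. \<mu> b *\<^sub>R b)"
    using assms(3) unfolding convex_hull_finite[OF assms(1)] by blast
  have coord: "barycentric C b x = (if b \<in> C then \<mu> b else 0)" for b
    unfolding \<mu>(3) by (rule barycentric_affine_combination[OF assms(2) order_refl \<mu>(2)])
  show "0 \<le> barycentric C b x"
    using \<mu>(1) by (simp add: coord)
  show "(\<Sum>b\<in>C. barycentric C b x) = 1"
    using \<mu>(2) by (simp add: coord)
  have combination: "(\<Sum>b\<in>C. barycentric C b x *\<^sub>R b) = (\<Sum>b\<in>C. \<mu> b *\<^sub>R b)"
    by (rule sum.cong) (simp_all add: coord)
  show "x = (\<Sum>b\<in>C. barycentric C b x *\<^sub>R b)"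
    by (subst combination) (rule \<mu>(3))
qed

lemma barycentric_expansion:
  assumes "finite C" "\<not> affine_dependent C" "x \<in> convex hull C"
    and "\<forall>y\<in>convex hull C. f y = a \<bullet> y + c"
  shows "f x = (\<Sum>b\<in>C. barycentric C b x * f b)"
proof -
  have "affine_functional (\<lambda>y. a \<bullet> y + c)"
    unfolding affine_functional_def by blast
  then have "a \<bullet> (\<Sum>b\<in>C. barycentric C b x *\<^sub>R b) + c = (\<Sum>b\<in>C. barycentric C b x * (a \<bullet> b + c))"
    by (rule affine_functional_affine_combination[OF _ sum_barycentric[OF assms(1-3)]])
  then have "f x = (\<Sum>b\<in>C. barycentric C b x * (a \<bullet> b + c))"
    using assms(3,4) barycentric_representation[OF assms(1-3)] by simp
  also have "\<dots> = (\<Sum>b\<in>C. barycentric C b x * f b)"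
  proof (rule sum.cong[OF refl])
    fix b assume "b \<in> C"
    then have "b \<in> convex hull C" by (rule hull_inc)
    then show "barycentric C b x * (a \<bullet> b + c) = barycentric C b x * f b"
      using assms(4) by simp
  qed
  finally show ?thesis .
qed

definition vertices :: "'a::real_vector set \<Rightarrow> 'a set" where
  "vertices T = {x. x extreme_point_of T}"

lemma nodes_eq_Union_vertices: "nodes \<T> = \<Union> (vertices ` \<T>)"
  unfolding nodes_def vertices_def by blast

lemma vertices_subset: "vertices T \<subseteq> T"
  unfolding vertices_def extreme_point_of_def by blast

lemma vertices_convex_hull:
  fixes C :: "'a::euclidean_space set"
  shows "\<not> affine_dependent C \<Longrightarrow> vertices (convex hull C) = C"
  unfolding vertices_def using extreme_point_of_convex_hull_affine_independent by blast

lemma mesh_simplex_vertices: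
  assumes "simplicial_mesh \<T>" "T \<in> \<T>"
  shows "finite (vertices T)" "\<not> affine_dependent (vertices T)" "convex hull (vertices T) = T"
proof -
  obtain C where C: "finite C" "\<not> affine_dependent C" "T = convex hull C"
    using assms unfolding simplicial_mesh_def simplex by blast
  then have "vertices T = C" using vertices_convex_hull by blast
  then show "finite (vertices T)" "\<not> affine_dependent (vertices T)" "convex hull (vertices T) = T"
    using C by simp_all
qed

lemma finite_nodes:
  assumes "simplicial_mesh \<T>"
  shows "finite (nodes \<T>)"
proof -
  have "finite \<T>" using assms unfolding simplicial_mesh_def by blast
  then show ?thesis
    unfolding nodes_eq_Union_vertices using mesh_simplex_vertices(1)[OF assms] by blast
qed

lemma face_of_simplex_vertices:
  fixes C :: "'a::euclidean_space set"
  assumes "\<not> affine_dependent C" "F face_of convex hull C"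
  shows "vertices F \<subseteq> C" "convex hull (vertices F) = F"
proof -
  obtain W where W: "W \<subseteq> C" "F = convex hull W"
    using face_of_convex_hull_affine_independent[OF assms(1)] assms(2) by blast
  have "\<not> affine_dependent W"
    using affine_dependent_subset[OF _ W(1)] assms(1) by blast
  then have "vertices F = W"
    using W(2) vertices_convex_hull by simp
  then show "vertices F \<subseteq> C" "convex hull (vertices F) = F"
    using W by simp_all
qed

text \<open>By conformity \<open>T \<inter> T'\<close> is the convex hull of common vertices, and on it both
  coordinate systems reduce to the coordinates with respect to these common vertices.\<close>

lemma barycentric_mesh_consistent:
  assumes "simplicial_mesh \<T>" "T \<in> \<T>" "T' \<in> \<T>" "x \<in> T" "x \<in> T'"
  shows "barycentric (vertices T) z x = barycentric (vertices T') z x"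
proof -
  let ?W = "vertices (T \<inter> T')"
  have faces: "T \<inter> T' face_of T" "T \<inter> T' face_of T'"
    using assms(1-3) unfolding simplicial_mesh_def by blast+
  have T: "\<not> affine_dependent (vertices T)" "convex hull (vertices T) = T"
    and T': "\<not> affine_dependent (vertices T')" "convex hull (vertices T') = T'"
    using mesh_simplex_vertices assms(1-3) by blast+
  have W: "?W \<subseteq> vertices T" "?W \<subseteq> vertices T'" "convex hull ?W = T \<inter> T'"
    using face_of_simplex_vertices[OF T(1)] face_of_simplex_vertices[OF T'(1)] faces
    by (simp_all add: T(2) T'(2))
  have "finite ?W"
    using W(1) mesh_simplex_vertices(1)[OF assms(1,2)] finite_subset by blast
  moreover have "x \<in> convex hull ?W" using W(3) assms(4,5) by blast
  ultimately obtain \<mu> where \<mu>: "sum \<mu> ?W = 1" "x = (\<Sum>b\<in>?W. \<mu> b *\<^sub>R b)"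
    unfolding convex_hull_finite[OF \<open>finite ?W\<close>] by blast
  have "barycentric (vertices T) z x = (if z \<in> ?W then \<mu> z else 0)"
    unfolding \<mu>(2) by (rule barycentric_affine_combination[OF T(1) W(1) \<mu>(1)])
  moreover have "barycentric (vertices T') z x = (if z \<in> ?W then \<mu> z else 0)"
    unfolding \<mu>(2) by (rule barycentric_affine_combination[OF T'(1) W(2) \<mu>(1)])
  ultimately show ?thesis by simp
qed

definition mesh_hat :: "'a::euclidean_space set set \<Rightarrow> 'a \<Rightarrow> 'a \<Rightarrow> real" where
  "mesh_hat \<T> z x =
     (if x \<in> \<Union>\<T> then barycentric (vertices (SOME T. T \<in> \<T> \<and> x \<in> T)) z x else 0)"

lemma mesh_hat_eq_barycentric:
  assumes "simplicial_mesh \<T>" "T \<in> \<T>" "x \<in> T"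
  shows "mesh_hat \<T> z x = barycentric (vertices T) z x"
proof -
  let ?T\<^sub>0 = "SOME T. T \<in> \<T> \<and> x \<in> T"
  have "\<exists>T. T \<in> \<T> \<and> x \<in> T" using assms(2,3) by blast
  then have "?T\<^sub>0 \<in> \<T> \<and> x \<in> ?T\<^sub>0" by (rule someI_ex)
  then have T\<^sub>0: "?T\<^sub>0 \<in> \<T>" "x \<in> ?T\<^sub>0" by blast+
  have "x \<in> \<Union>\<T>" using assms(2,3) by blast
  then have "mesh_hat \<T> z x = barycentric (vertices ?T\<^sub>0) z x"
    by (simp add: mesh_hat_def)
  also have "\<dots> = barycentric (vertices T) z x"
    by (rule barycentric_mesh_consistent[OF assms(1) T\<^sub>0(1) assms(2) T\<^sub>0(2) assms(3)])
  finally show ?thesis .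
qed

lemma Vh_barycentric_expansion:
  assumes "simplicial_mesh \<T>" "u \<in> Vh \<T>" "T \<in> \<T>" "x \<in> T"
  shows "u x = (\<Sum>b\<in>vertices T. barycentric (vertices T) b x * u b)"
proof -
  note T = mesh_simplex_vertices[OF assms(1,3)]
  obtain a c where "\<forall>y\<in>T. u y = a \<bullet> y + c"
    using assms(2,3) unfolding Vh_def by blast
  then have "\<forall>y\<in>convex hull (vertices T). u y = a \<bullet> y + c"
    by (simp only: T(3))
  moreover have "x \<in> convex hull (vertices T)"
    using assms(4) by (simp only: T(3))
  ultimately show ?thesis
    by (intro barycentric_expansion[OF T(1,2)])
qed

lemma mesh_hat_in_Vh:
  assumes "simplicial_mesh \<T>"
  shows "mesh_hat \<T> z \<in> Vh \<T>"
proof -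
  have on_simplex: "\<forall>x\<in>T. mesh_hat \<T> z x = barycentric (vertices T) z x" if "T \<in> \<T>" for T
    using mesh_hat_eq_barycentric[OF assms that] by blast
  have affine: "affine_functional (barycentric (vertices T) z)" if "T \<in> \<T>" for T
    using affine_functional_barycentric mesh_simplex_vertices(2)[OF assms that] by blast
  have "continuous_on (\<Union>T\<in>\<T>. T) (mesh_hat \<T> z)"
  proof (rule continuous_on_closed_Union)
    show "finite \<T>" using assms unfolding simplicial_mesh_def by blast
  next
    fix T assume "T \<in> \<T>"
    then show "closed T" using assms closed_simplex unfolding simplicial_mesh_def by blast
    show "continuous_on T (mesh_hat \<T> z)"
      using continuous_on_affine_functional[OF affine[OF \<open>T \<in> \<T>\<close>]]
      by (rule continuous_on_eq) (simp add: on_simplex[OF \<open>T \<in> \<T>\<close>])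
  qed
  moreover have "\<exists>a c. \<forall>x\<in>T. mesh_hat \<T> z x = a \<bullet> x + c" if T: "T \<in> \<T>" for T
  proof -
    obtain a c where "\<forall>x. barycentric (vertices T) z x = a \<bullet> x + c"
      using affine[OF T] unfolding affine_functional_def by blast
    then show ?thesis using on_simplex[OF T] by auto
  qed
  ultimately show ?thesis unfolding Vh_def by simp
qed

lemma mesh_hat_at_node:
  assumes "simplicial_mesh \<T>" "z' \<in> nodes \<T>"
  shows "mesh_hat \<T> z z' = (if z' = z then 1 else 0)"
proof -
  obtain T where T: "T \<in> \<T>" "z' \<in> vertices T"
    using assms(2) unfolding nodes_eq_Union_vertices by blast
  have "z' \<in> T" using T(2) vertices_subset by blast
  then have "mesh_hat \<T> z z' = barycentric (vertices T) z z'"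
    by (rule mesh_hat_eq_barycentric[OF assms(1) T(1)])
  also have "\<dots> = (if z' = z then 1 else 0)"
    by (rule barycentric_vertex[OF mesh_simplex_vertices(2)[OF assms(1) T(1)] T(2)])
  finally show ?thesis .
qed

lemma Vh_eq_mesh_hat:
  assumes "simplicial_mesh \<T>" "g \<in> Vh \<T>"
    and "\<forall>z'\<in>nodes \<T>. g z' = (if z' = z then 1 else 0)" "\<forall>x. x \<notin> \<Union>\<T> \<longrightarrow> g x = 0"
  shows "g = mesh_hat \<T> z"
proof
  fix x
  show "g x = mesh_hat \<T> z x"
  proof (cases "x \<in> \<Union>\<T>")
    case False
    then show ?thesis using assms(4) by (simp add: mesh_hat_def)
  next
    case True
    then obtain T where T: "T \<in> \<T>" "x \<in> T" by blast
    have "vertices T \<subseteq> nodes \<T>" using T(1) nodes_eq_Union_vertices by blast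
    then have "g x = (\<Sum>b\<in>vertices T. if b = z then barycentric (vertices T) z x else 0)"
      unfolding Vh_barycentric_expansion[OF assms(1,2) T] using assms(3)
      by (intro sum.cong) auto
    also have "\<dots> = barycentric (vertices T) z x"
      using mesh_simplex_vertices(1)[OF assms(1) T(1)] by (simp add: barycentric_def)
    finally show ?thesis using mesh_hat_eq_barycentric[OF assms(1) T] by simp
  qed
qed

lemma hat_eq_mesh_hat:
  assumes "simplicial_mesh \<T>"
  shows "hat \<T> z = mesh_hat \<T> z"
  unfolding hat_def
proof (rule the_equality)
  show "mesh_hat \<T> z \<in> Vh \<T> \<and> (\<forall>z'\<in>nodes \<T>. mesh_hat \<T> z z' = (if z' = z then 1 else 0)) \<and>
        (\<forall>x. x \<notin> \<Union>\<T> \<longrightarrow> mesh_hat \<T> z x = 0)"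
    using mesh_hat_in_Vh[OF assms] mesh_hat_at_node[OF assms] by (simp add: mesh_hat_def)
qed (use Vh_eq_mesh_hat[OF assms] in blast)

lemma hat_eq_barycentric:
  assumes "simplicial_mesh \<T>" "T \<in> \<T>" "x \<in> T"
  shows "hat \<T> z x = barycentric (vertices T) z x"
  using hat_eq_mesh_hat[OF assms(1)] mesh_hat_eq_barycentric[OF assms] by simp

lemma lagrange_interp_Vh:
  assumes "simplicial_mesh \<T>" "u \<in> Vh \<T>" "x \<in> \<Union>\<T>"
  shows "lagrange_interp \<T> u x = u x"
proof -
  obtain T where T: "T \<in> \<T>" "x \<in> T" using assms(3) by blast
  have "vertices T \<subseteq> nodes \<T>" using T(1) nodes_eq_Union_vertices by blast
  have "lagrange_interp \<T> u x = (\<Sum>b\<in>nodes \<T>. u b * barycentric (vertices T) b x)"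
    unfolding lagrange_interp_def using hat_eq_barycentric[OF assms(1) T] by simp
  also have "\<dots> = (\<Sum>b\<in>vertices T. u b * barycentric (vertices T) b x)"
    by (rule sum.mono_neutral_right[OF finite_nodes[OF assms(1)] \<open>vertices T \<subseteq> nodes \<T>\<close>])
      (simp add: barycentric_def)
  also have "\<dots> = (\<Sum>b\<in>vertices T. barycentric (vertices T) b x * u b)"
    by (simp add: mult.commute)
  also have "\<dots> = u x"
    using Vh_barycentric_expansion[OF assms(1,2) T] by simp
  finally show ?thesis .
qed

lemma Vh_diff:
  assumes "u \<in> Vh \<T>" "v \<in> Vh \<T>"
  shows "u - v \<in> Vh \<T>"
proof -
  have "continuous_on (\<Union>\<T>) u" "continuous_on (\<Union>\<T>) v"
    using assms unfolding Vh_def by blast+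
  then have "continuous_on (\<Union>\<T>) (u - v)"
    unfolding fun_diff_def by (rule continuous_on_diff)
  moreover have "\<exists>a c. \<forall>x\<in>T. (u - v) x = a \<bullet> x + c" if T: "T \<in> \<T>" for T
  proof -
    obtain a c a' c' where "\<forall>x\<in>T. u x = a \<bullet> x + c" "\<forall>x\<in>T. v x = a' \<bullet> x + c'"
      using assms T unfolding Vh_def by blast
    then have "\<forall>x\<in>T. (u - v) x = (a - a') \<bullet> x + (c - c')"
      by (simp add: inner_diff_left)
    then show ?thesis by (intro exI)
  qed
  ultimately show ?thesis unfolding Vh_def by blast
qed

lemma Vh_le_if_le_on_hat_support:
  assumes "simplicial_mesh \<T>" "u \<in> Vh \<T>" "x \<in> \<Union>\<T>"
    and "\<forall>b\<in>nodes \<T>. 0 < hat \<T> b x \<longrightarrow> u b \<le> c"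
  shows "u x \<le> c"
proof -
  obtain T where T: "T \<in> \<T>" "x \<in> T" using assms(3) by blast
  let ?coord = "\<lambda>b. barycentric (vertices T) b x"
  note simplex = mesh_simplex_vertices[OF assms(1) T(1)]
  have hull: "x \<in> convex hull (vertices T)" using T(2) by (simp add: simplex(3))
  have nonneg: "0 \<le> ?coord b" for b
    by (rule barycentric_nonneg[OF simplex(1,2) hull])
  have "u x = (\<Sum>b\<in>vertices T. ?coord b * u b)"
    by (rule Vh_barycentric_expansion[OF assms(1,2) T])
  also have "\<dots> \<le> (\<Sum>b\<in>vertices T. ?coord b * c)"
  proof (rule sum_mono)
    fix b assume "b \<in> vertices T"
    then have "b \<in> nodes \<T>" using T(1) nodes_eq_Union_vertices by blast
    then have "0 < ?coord b \<longrightarrow> u b \<le> c"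
      using assms(4) hat_eq_barycentric[OF assms(1) T] by simp
    then show "?coord b * u b \<le> ?coord b * c"
      using nonneg[of b] by (cases "?coord b = 0") (auto intro: mult_left_mono)
  qed
  also have "\<dots> = (\<Sum>b\<in>vertices T. ?coord b) * c"
    by (simp add: sum_distrib_right)
  also have "\<dots> = c"
    by (simp add: sum_barycentric[OF simplex(1,2) hull])
  finally show ?thesis .
qed

lemma mesh_size_nonneg:
  assumes "simplicial_mesh \<T>"
  shows "0 \<le> mesh_size \<T>"
proof -
  obtain T where T: "T \<in> \<T>" using assms unfolding simplicial_mesh_def by blast
  then have "bounded T"
    using assms compact_simplex compact_imp_bounded unfolding simplicial_mesh_def by blast
  then have "0 \<le> diameter T" by (rule diameter_ge_0)
  also have "\<dots> \<le> mesh_size \<T>"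
    unfolding mesh_size_def using assms T by (intro Max_ge) (auto simp: simplicial_mesh_def)
  finally show ?thesis .
qed

lemma ball_infdist_frontier_subset:
  fixes \<Omega> :: "'a::real_normed_vector set"
  assumes "x \<in> \<Omega>"
  shows "ball x (infdist x (frontier \<Omega>)) \<subseteq> \<Omega>"
proof
  fix y assume y: "y \<in> ball x (infdist x (frontier \<Omega>))"
  show "y \<in> \<Omega>"
  proof (rule ccontr)
    assume "y \<notin> \<Omega>"
    let ?B = "ball x (infdist x (frontier \<Omega>))"
    have "dist x y < infdist x (frontier \<Omega>)" using y by simp
    then have "0 < infdist x (frontier \<Omega>)" using zero_le_dist[of x y] by linarith
    then have "x \<in> ?B" by simp
    have "?B \<inter> frontier \<Omega> \<noteq> {}"
    proof (rule connected_Int_frontier[OF connected_ball])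
      show "?B \<inter> \<Omega> \<noteq> {}" using \<open>x \<in> ?B\<close> assms by blast
      show "?B - \<Omega> \<noteq> {}" using y \<open>y \<notin> \<Omega>\<close> by blast
    qed
    then obtain p where "p \<in> frontier \<Omega>" "dist x p < infdist x (frontier \<Omega>)"
      by auto
    then show False using infdist_le[of p "frontier \<Omega>" x] by simp
  qed
qed

lemma inner_layer_dist:
  assumes "0 \<le> r" "x \<in> inner_layer \<Omega> (r + d)" "dist x y \<le> d"
  shows "y \<in> inner_layer \<Omega> r"
proof -
  have x: "x \<in> \<Omega>" "r + d < infdist x (frontier \<Omega>)"
    using assms(2) unfolding inner_layer_def by auto
  have "y \<in> ball x (infdist x (frontier \<Omega>))"
    using x(2) assms(1,3) by simp
  then have "y \<in> \<Omega>"
    using ball_infdist_frontier_subset[OF x(1)] by blast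
  moreover have "infdist x (frontier \<Omega>) \<le> infdist y (frontier \<Omega>) + dist x y"
    by (rule infdist_triangle)
  then have "r < infdist y (frontier \<Omega>)"
    using x(2) assms(3) by linarith
  ultimately show ?thesis unfolding inner_layer_def by blast
qed

lemma inner_layer_antimono: "r \<le> r' \<Longrightarrow> inner_layer \<Omega> r' \<subseteq> inner_layer \<Omega> r"
  unfolding inner_layer_def by auto

lemma stencil_dist:
  assumes "0 \<le> \<epsilon>" "S \<subseteq> sphere 0 1" "y \<in> stencil \<epsilon> S z"
  shows "dist z y \<le> \<epsilon>"
  using assms unfolding stencil_def by (auto simp: dist_norm)

lemma Max_image_diff_le:
  fixes f g :: "'a \<Rightarrow> real"
  assumes "finite A" "z \<in> A" "\<forall>y\<in>A. f y - g y \<le> f z - g z"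
  shows "Max (f ` A) - f z \<le> Max (g ` A) - g z"
proof -
  have "Max (f ` A) \<in> f ` A" using assms(1,2) by (intro Max_in) auto
  then obtain y where y: "y \<in> A" "Max (f ` A) = f y" by auto
  have "g y \<le> Max (g ` A)" using assms(1) y(1) by simp
  moreover have "f y - g y \<le> f z - g z" using assms(3) y(1) by blast
  ultimately show ?thesis using y(2) by linarith
qed

lemma Min_image_diff_le:
  fixes f g :: "'a \<Rightarrow> real"
  assumes "finite A" "z \<in> A" "\<forall>y\<in>A. f y - g y \<le> f z - g z"
  shows "g z - Min (g ` A) \<le> f z - Min (f ` A)"
proof -
  have "Min (g ` A) \<in> g ` A" using assms(1,2) by (intro Min_in) auto
  then obtain y where y: "y \<in> A" "Min (g ` A) = g y" by auto
  have "Min (f ` A) \<le> f y" using assms(1) y(1) by simp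
  moreover have "f y - g y \<le> f z - g z" using assms(3) y(1) by blast
  ultimately show ?thesis using y(2) by linarith
qed

lemma finite_stencil: "finite S \<Longrightarrow> finite (stencil \<epsilon> S z)"
  unfolding stencil_def by simp

lemma centre_in_stencil: "z \<in> stencil \<epsilon> S z"
  unfolding stencil_def by simp

lemma Splus_mono:
  assumes "0 \<le> \<epsilon>" "finite S" "\<forall>y\<in>stencil \<epsilon> S z. w y - v y \<le> w z - v z"
  shows "Splus \<epsilon> S w z \<le> Splus \<epsilon> S v z"
  unfolding Splus_def
  using Max_image_diff_le[OF finite_stencil[OF assms(2)] centre_in_stencil assms(3)] assms(1)
  by (rule divide_right_mono)

lemma Sminus_mono:
  assumes "0 \<le> \<epsilon>" "finite S" "\<forall>y\<in>stencil \<epsilon> S z. w y - v y \<le> w z - v z"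
  shows "Sminus \<epsilon> S v z \<le> Sminus \<epsilon> S w z"
  unfolding Sminus_def
  using Min_image_diff_le[OF finite_stencil[OF assms(2)] centre_in_stencil assms(3)] assms(1)
  by (rule divide_right_mono)

lemma neg_disc_inf_lap_eq:
  assumes "\<forall>y\<in>stencil \<epsilon> S z. lagrange_interp \<T> w y = w y"
  shows "neg_disc_inf_lap \<T> \<epsilon> S w z = - (Splus \<epsilon> S w z - Sminus \<epsilon> S w z) / \<epsilon>"
proof -
  have "lagrange_interp \<T> w ` stencil \<epsilon> S z = w ` stencil \<epsilon> S z"
    using assms by (auto intro!: image_cong)
  moreover have "lagrange_interp \<T> w z = w z"
    using assms centre_in_stencil by blast
  ultimately show ?thesis
    unfolding neg_disc_inf_lap_def Splus_def Sminus_def by simp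
qed

lemma stencil_subset_mesh:
  assumes "simplicial_mesh \<T>" "inner_layer \<Omega> (mesh_size \<T>) \<subseteq> mesh_domain \<T>"
    and "mesh_size \<T> \<le> \<epsilon>" "S \<subseteq> sphere 0 1" "z \<in> inner_layer \<Omega> (2 * \<epsilon>)"
  shows "stencil \<epsilon> S z \<subseteq> \<Union>\<T>"
proof
  fix y assume y: "y \<in> stencil \<epsilon> S z"
  have "0 \<le> mesh_size \<T>" by (rule mesh_size_nonneg[OF assms(1)])
  then have "0 \<le> \<epsilon>" using assms(3) by linarith
  have "inner_layer \<Omega> (2 * \<epsilon>) \<subseteq> inner_layer \<Omega> (mesh_size \<T> + \<epsilon>)"
    using assms(3) by (intro inner_layer_antimono) simp
  then have "z \<in> inner_layer \<Omega> (mesh_size \<T> + \<epsilon>)" using assms(5) by blast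
  then have "y \<in> inner_layer \<Omega> (mesh_size \<T>)"
    using inner_layer_dist[OF \<open>0 \<le> mesh_size \<T>\<close> _ stencil_dist[OF \<open>0 \<le> \<epsilon>\<close> assms(4) y]] by blast
  then show "y \<in> \<Union>\<T>" using assms(2) interior_subset unfolding mesh_domain_def by blast
qed

lemma stencil_diff_le_centre:
  assumes "simplicial_mesh \<T>" "w \<in> Vh \<T>" "v \<in> Vh \<T>" "stencil \<epsilon> S z \<subseteq> \<Union>\<T>"
    and "\<forall>z'\<in>ext_stencil \<T> \<epsilon> S z. (w - v) z' \<le> (w - v) z"
  shows "\<forall>y\<in>stencil \<epsilon> S z. w y - v y \<le> w z - v z"
proof
  fix y assume y: "y \<in> stencil \<epsilon> S z"
  show "w y - v y \<le> w z - v z"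
  proof (cases "y = z")
    case False
    then obtain s where s: "s \<in> S" "y = z + \<epsilon> *\<^sub>R s" using y unfolding stencil_def by blast
    have "b \<in> ext_stencil \<T> \<epsilon> S z" if "b \<in> nodes \<T>" "0 < hat \<T> b y" for b
      using that s unfolding ext_stencil_def by blast
    then have "\<forall>b\<in>nodes \<T>. 0 < hat \<T> b y \<longrightarrow> (w - v) b \<le> (w - v) z"
      using assms(5) by blast
    moreover have "y \<in> \<Union>\<T>" using y assms(4) by blast
    ultimately have "(w - v) y \<le> (w - v) z"
      using Vh_le_if_le_on_hat_support[OF assms(1) Vh_diff[OF assms(2,3)]] by blast
    then show ?thesis by simp
  qed simp
qed

theorem lemma3p1:
  fixes \<Omega> :: "'a::euclidean_space set" and \<T> :: "'a set set"
    and \<epsilon> \<theta> :: real and S :: "'a set" and z :: 'a and w v :: "'a \<Rightarrow> real"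
  assumes "bounded_domain_cb \<Omega>"
    and "simplicial_mesh \<T>"
    and "inner_layer \<Omega> (mesh_size \<T>) \<subseteq> mesh_domain \<T>" and "mesh_domain \<T> \<subseteq> \<Omega>"
    and "mesh_size \<T> \<le> \<epsilon>" and "\<epsilon> \<le> diameter \<Omega>"
    and "0 < \<theta>" and "\<theta> \<le> 1"
    and "theta_net \<theta> S"
    and "z \<in> nodes \<T> \<inter> inner_layer \<Omega> (2 * \<epsilon>)"
    and "w \<in> Vh \<T>" and "v \<in> Vh \<T>"
    and "\<forall>z'\<in>ext_stencil \<T> \<epsilon> S z. (w - v) z \<ge> (w - v) z'"
  shows "Splus \<epsilon> S w z \<le> Splus \<epsilon> S v z \<and> Sminus \<epsilon> S w z \<ge> Sminus \<epsilon> S v z \<and>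
         neg_disc_inf_lap \<T> \<epsilon> S w z \<ge> neg_disc_inf_lap \<T> \<epsilon> S v z"
proof -
  have "0 \<le> \<epsilon>" using mesh_size_nonneg[OF assms(2)] assms(5) by linarith
  have S: "finite S" "S \<subseteq> sphere 0 1" using assms(9) unfolding theta_net_def by blast+
  have in_mesh: "stencil \<epsilon> S z \<subseteq> \<Union>\<T>"
    using stencil_subset_mesh[OF assms(2,3,5) S(2)] assms(10) by blast
  have "\<forall>y\<in>stencil \<epsilon> S z. w y - v y \<le> w z - v z"
    using stencil_diff_le_centre[OF assms(2,11,12) in_mesh] assms(13) by blast
  then have plus: "Splus \<epsilon> S w z \<le> Splus \<epsilon> S v z"
    and minus: "Sminus \<epsilon> S v z \<le> Sminus \<epsilon> S w z"
    by (rule Splus_mono[OF \<open>0 \<le> \<epsilon>\<close> S(1)], rule Sminus_mono[OF \<open>0 \<le> \<epsilon>\<close> S(1)])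
  have lap: "neg_disc_inf_lap \<T> \<epsilon> S u z = - (Splus \<epsilon> S u z - Sminus \<epsilon> S u z) / \<epsilon>"
    if "u \<in> Vh \<T>" for u
    by (rule neg_disc_inf_lap_eq) (use lagrange_interp_Vh[OF assms(2) that] in_mesh in blast)
  have "- (Splus \<epsilon> S v z - Sminus \<epsilon> S v z) / \<epsilon> \<le> - (Splus \<epsilon> S w z - Sminus \<epsilon> S w z) / \<epsilon>"
    using plus minus \<open>0 \<le> \<epsilon>\<close> by (intro divide_right_mono) auto
  then show ?thesis
    using plus minus by (simp add: lap[OF assms(11)] lap[OF assms(12)])
qed

end
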